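(* Let $G\le\mathrm{Aut}(\mathcal{T}_d)$ be any self-similar group. Then every non-trivial element of the Röver–Nekrashevych group $V_d(G)$ has infinitely many $F_d$-conjugates; equivalently, the inclusion $L(F_d)\subseteq L(V_d(G))$ is irreducible.
   Context: Fix $d\ge2$. $\mathcal{T}_d$ is the infinite rooted $d$-regular tree with vertex set $\{1,\dots,d\}^*$ (finite words, root the empty word), $w$ adjacent to $wi$. Every automorphism permutes the level-1 vertices, giving $\rho:\mathrm{Aut}(\mathcal{T}_d)\to S_d$. Let $\mathcal{T}_d(i)$ be the subtree spanned by words $iw$ and $\delta_i:\mathcal{T}_d\to\mathcal{T}_d(i)$, $w\mapsto iw$. For $g\in\mathrm{Aut}(\mathcal{T}_d)$ put $\phi_i(g)=\delta^{-1}_{\rho(g)i}\circ g|_{\mathcal{T}_d(i)}\circ\delta_i$. $G\le\mathrm{Aut}(\mathcal{T}_d)$ is self-similar if $\phi_i(G)\subseteq G$ for all $i$. Let $C_d=\{1,\dots,d\}^{\mathbb{N}}$, and for $w\in\{1,\dots,d\}^*$ let $C_d(w)=\{w\kappa:\kappa\in C_d\}$ with homeomorphism $h_w:C_d\to C_d(w)$, $\kappa\mapsto w\kappa$. $V_d(G)$ is the group of homeomorphisms of $C_d$ obtained by choosing two partitions of $C_d$ into the same number $n$ of cones $C_d(w_1^+),\dots,C_d(w_n^+)$ and $C_d(w_1^-),\dots,C_d(w_n^-)$, a bijection $i\mapsto j(i)$, and $g_1,\dots,g_n\in G$, and mapping $C_d(w_i^+)$ to $C_d(w_{j(i)}^-)$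 via $h_{w_{j(i)}^-}\circ g_i\circ h_{w_i^+}^{-1}$. $F_d\le V_d(G)$ is the subgroup of such homeomorphisms with all $g_i=1$ that preserve the lexicographic order of $C_d$. An inclusion $N\subseteq M$ of von Neumann algebras is irreducible if $N'\cap M\subseteq N$. $L(G)$ is the group von Neumann algebra. *)

theory Defs
  imports Main
begin

definition words :: "nat \<Rightarrow> nat list set" where
  "words d = {w. set w \<subseteq> {1..d}}"

definition tree_adj :: "nat \<Rightarrow> nat list \<Rightarrow> nat list \<Rightarrow> bool" where
  "tree_adj d v w \<longleftrightarrow> (\<exists>i\<in>{1..d}. w = v @ [i] \<or> v = w @ [i])"

text \<open>Automorphisms of T_d, represented extensionally (identity off the vertex set).\<close>
definition tree_aut :: "nat \<Rightarrow> (nat list \<Rightarrow> nat list) \<Rightarrow> bool" where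
  "tree_aut d g \<longleftrightarrow> bij_betw g (words d) (words d)
     \<and> (\<forall>v\<in>words d. \<forall>w\<in>words d. tree_adj d v w \<longleftrightarrow> tree_adj d (g v) (g w))
     \<and> (\<forall>x. x \<notin> words d \<longrightarrow> g x = x)"

definition aut_subgroup :: "nat \<Rightarrow> (nat list \<Rightarrow> nat list) set \<Rightarrow> bool" where
  "aut_subgroup d G \<longleftrightarrow> G \<subseteq> {g. tree_aut d g} \<and> id \<in> G
     \<and> (\<forall>a\<in>G. \<forall>b\<in>G. a \<circ> b \<in> G) \<and> (\<forall>a\<in>G. inv a \<in> G)"

text \<open>phi_i(g) = delta^{-1}_{rho(g) i} o g|_{T_d(i)} o delta_i.\<close>
definition sec :: "nat \<Rightarrow> nat \<Rightarrow> (nat list \<Rightarrow> nat list) \<Rightarrow> nat list \<Rightarrow> nat list" where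
  "sec d i g = (\<lambda>w. if w \<in> words d then tl (g (i # w)) else w)"

definition self_similar :: "nat \<Rightarrow> (nat list \<Rightarrow> nat list) set \<Rightarrow> bool" where
  "self_similar d G \<longleftrightarrow> aut_subgroup d G \<and> (\<forall>g\<in>G. \<forall>i\<in>{1..d}. sec d i g \<in> G)"

definition cantor :: "nat \<Rightarrow> (nat \<Rightarrow> nat) set" where
  "cantor d = {\<kappa>. \<forall>n. \<kappa> n \<in> {1..d}}"

definition cone :: "nat \<Rightarrow> nat list \<Rightarrow> (nat \<Rightarrow> nat) set" where
  "cone d w = {\<kappa> \<in> cantor d. \<forall>n<length w. \<kappa> n = w ! n}"

definition hw :: "nat list \<Rightarrow> (nat \<Rightarrow> nat) \<Rightarrow> (nat \<Rightarrow> nat)" where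
  "hw w \<kappa> = (\<lambda>n. if n < length w then w ! n else \<kappa> (n - length w))"

definition bact :: "(nat list \<Rightarrow> nat list) \<Rightarrow> (nat \<Rightarrow> nat) \<Rightarrow> (nat \<Rightarrow> nat)" where
  "bact g \<kappa> = (\<lambda>n. g (map \<kappa> [0..<Suc n]) ! n)"

text \<open>Elements of V_d(G) given by data (n, w+, w-, j, g), as homeomorphisms of C_d
  represented extensionally (identity outside C_d).\<close>
definition V_data :: "nat \<Rightarrow> (nat list \<Rightarrow> nat list) set \<Rightarrow> ((nat \<Rightarrow> nat) \<Rightarrow> (nat \<Rightarrow> nat))
   \<Rightarrow> nat \<Rightarrow> (nat \<Rightarrow> nat list) \<Rightarrow> (nat \<Rightarrow> nat list) \<Rightarrow> (nat \<Rightarrow> nat)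
   \<Rightarrow> (nat \<Rightarrow> nat list \<Rightarrow> nat list) \<Rightarrow> bool" where
  "V_data d G f n wp wm j gs \<longleftrightarrow>
     (\<forall>k<n. wp k \<in> words d \<and> wm k \<in> words d \<and> gs k \<in> G)
   \<and> (\<forall>k<n. \<forall>l<n. k \<noteq> l \<longrightarrow> cone d (wp k) \<inter> cone d (wp l) = {})
   \<and> (\<forall>k<n. \<forall>l<n. k \<noteq> l \<longrightarrow> cone d (wm k) \<inter> cone d (wm l) = {})
   \<and> (\<Union>k<n. cone d (wp k)) = cantor d
   \<and> (\<Union>k<n. cone d (wm k)) = cantor d
   \<and> bij_betw j {..<n} {..<n}
   \<and> (\<forall>k<n. \<forall>\<kappa>\<in>cantor d. f (hw (wp k) \<kappa>) = hw (wm (j k)) (bact (gs k) \<kappa>))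
   \<and> (\<forall>\<kappa>. \<kappa> \<notin> cantor d \<longrightarrow> f \<kappa> = \<kappa>)"

definition Vgrp :: "nat \<Rightarrow> (nat list \<Rightarrow> nat list) set \<Rightarrow> ((nat \<Rightarrow> nat) \<Rightarrow> (nat \<Rightarrow> nat)) set" where
  "Vgrp d G = {f. \<exists>n wp wm j gs. V_data d G f n wp wm j gs}"

definition lex_less :: "(nat \<Rightarrow> nat) \<Rightarrow> (nat \<Rightarrow> nat) \<Rightarrow> bool" where
  "lex_less \<kappa> \<mu> \<longleftrightarrow> (\<exists>n. (\<forall>m<n. \<kappa> m = \<mu> m) \<and> \<kappa> n < \<mu> n)"

definition Fgrp :: "nat \<Rightarrow> ((nat \<Rightarrow> nat) \<Rightarrow> (nat \<Rightarrow> nat)) set" where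
  "Fgrp d = {f \<in> Vgrp d {id}. \<forall>\<kappa>\<in>cantor d. \<forall>\<mu>\<in>cantor d. lex_less \<kappa> \<mu> \<longrightarrow> lex_less (f \<kappa>) (f \<mu>)}"

end

theory Submission
  imports Defs
begin

text \<open>Near a point \<open>\<kappa>\<close> that it moves, a non-trivial \<open>f \<in> V\<^sub>d(G)\<close> acts on some cone \<open>p C\<^sub>d\<close> as
  \<open>p x \<mapsto> q (g x)\<close>. Tree automorphisms act on prefixes, so this map is injective and its
  \<open>N\<close>-th letter only depends on the first \<open>|p| + N + 1\<close> letters of the argument. Choosing \<open>N\<close>
  with \<open>(f \<kappa>) N \<noteq> \<kappa> N\<close>, the cone \<open>U\<close> given by the first \<open>|p| + N + 1\<close> letters of \<open>\<kappa>\<close> satisfies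
  \<open>f U \<inter> U = {}\<close>. Copies of the generator \<open>x\<^sub>0\<close> of \<open>F\<^sub>d\<close> placed in the cones \<open>u d\<^sup>m \<subseteq> U\<close> give
  infinitely many distinct \<open>\<phi> \<in> F\<^sub>d\<close> supported in \<open>U\<close>; on \<open>U\<close> the conjugate \<open>\<phi> f \<phi>\<^sup>-\<^sup>1\<close>
  equals \<open>f \<phi>\<^sup>-\<^sup>1\<close>, so distinct \<open>\<phi>\<close> give distinct conjugates.\<close>

section \<open>Words, cones and shifts\<close>

definition shift :: "nat \<Rightarrow> (nat \<Rightarrow> nat) \<Rightarrow> (nat \<Rightarrow> nat)" where
  "shift m x = (\<lambda>n. x (n + m))"

lemma shift_0 [simp]: "shift 0 x = x"
  by (simp add: shift_def)

lemma shift_shift: "shift m (shift k x) = shift (k + m) x"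
  by (simp add: shift_def ac_simps)

lemma shift_hw [simp]: "shift (length w) (hw w a) = a"
  by (simp add: shift_def hw_def)

lemma hw_inj: "hw w a = hw w b \<Longrightarrow> a = b"
  by (metis shift_hw)

lemma hw_Nil [simp]: "hw [] a = a"
  by (simp add: hw_def)

lemma hw_append: "hw u (hw w a) = hw (u @ w) a"
  by (auto simp: hw_def nth_append fun_eq_iff)

lemma words_Cons [simp]: "c # w \<in> words d \<longleftrightarrow> c \<in> {1..d} \<and> w \<in> words d"
  by (auto simp: words_def)

lemma words_append [simp]: "u @ w \<in> words d \<longleftrightarrow> u \<in> words d \<and> w \<in> words d"
  by (auto simp: words_def)

lemma words_Nil [simp]: "[] \<in> words d"
  by (simp add: words_def)

lemma shift_in_cantor: "x \<in> cantor d \<Longrightarrow> shift m x \<in> cantor d"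
  by (simp add: cantor_def shift_def)

lemma cantor_prefix_in_words: "x \<in> cantor d \<Longrightarrow> map x [0..<n] \<in> words d"
  by (auto simp: words_def cantor_def)

lemma hw_in_cantor: "w \<in> words d \<Longrightarrow> a \<in> cantor d \<Longrightarrow> hw w a \<in> cantor d"
  by (auto simp: cantor_def words_def hw_def dest: nth_mem)

lemma hw_in_cone: "w \<in> words d \<Longrightarrow> a \<in> cantor d \<Longrightarrow> hw w a \<in> cone d w"
  using hw_in_cantor by (simp add: cone_def hw_def)

lemma cone_subset_cantor: "cone d w \<subseteq> cantor d"
  by (auto simp: cone_def)

lemma hw_shift_cone: "x \<in> cone d w \<Longrightarrow> hw w (shift (length w) x) = x"
  by (auto simp: cone_def hw_def shift_def fun_eq_iff)

lemma shift_cone_in_cantor: "x \<in> cone d w \<Longrightarrow> shift (length w) x \<in> cantor d"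
  using cone_subset_cantor shift_in_cantor by blast

lemma cone_Nil [simp]: "cone d [] = cantor d"
  by (auto simp: cone_def)

lemma cone_append_subset: "cone d (u @ v) \<subseteq> cone d u"
  by (auto simp: cone_def nth_append)

lemma cone_single: "x \<in> cone d [c] \<longleftrightarrow> x \<in> cantor d \<and> x 0 = c"
  by (auto simp: cone_def)

lemma cone_Cons: "x \<in> cone d (c # w) \<longleftrightarrow> x \<in> cantor d \<and> x 0 = c \<and> shift 1 x \<in> cone d w"
  by (auto simp: cone_def shift_def cantor_def nth_Cons split: nat.splits)

lemma cone_Cons_disjoint:
  "cone d u \<inter> cone d v = {} \<Longrightarrow> cone d (c # u) \<inter> cone d (c # v) = {}"
  by (auto simp: cone_Cons)

lemma cone_Cons_Cons_disjoint: "a \<noteq> b \<Longrightarrow> cone d (a # u) \<inter> cone d (b # v) = {}"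
  by (auto simp: cone_def)

lemma hw_single_shift: "x 0 = c \<Longrightarrow> hw [c] (shift 1 x) = x"
  by (auto simp: hw_def shift_def fun_eq_iff)

section \<open>Tree automorphisms act on prefixes\<close>

definition tree_nbrs :: "nat \<Rightarrow> nat list \<Rightarrow> nat list set" where
  "tree_nbrs d v = {w \<in> words d. tree_adj d v w}"

lemma tree_nbrs_eq:
  assumes "v \<in> words d"
  shows "tree_nbrs d v = (\<lambda>i. v @ [i]) ` {1..d} \<union> (if v = [] then {} else {butlast v})"
proof -
  have "butlast v \<in> tree_nbrs d v" if "v \<noteq> []"
  proof -
    have v: "v = butlast v @ [last v]" using that by simp
    then have "last v \<in> {1..d}" "butlast v \<in> words d"
      using assms words_append[of "butlast v" "[last v]" d] by auto
    then show ?thesis using v by (auto simp: tree_nbrs_def tree_adj_def)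
  qed
  then show ?thesis using assms by (auto simp: tree_nbrs_def tree_adj_def)
qed

lemma card_tree_nbrs:
  assumes "v \<in> words d"
  shows "card (tree_nbrs d v) = (if v = [] then d else Suc d)"
proof -
  define C where "C = (\<lambda>i. v @ [i]) ` {1..d}"
  have "card C = d"
    unfolding C_def by (subst card_image) (auto simp: inj_on_def)
  moreover have "butlast v \<notin> C"
    by (auto simp: C_def dest: arg_cong[of _ _ length])
  moreover have "finite C" by (simp add: C_def)
  ultimately show ?thesis
    using tree_nbrs_eq[OF assms] unfolding C_def[symmetric] by simp
qed

lemma tree_aut_words: "tree_aut d g \<Longrightarrow> v \<in> words d \<Longrightarrow> g v \<in> words d"
  unfolding tree_aut_def using bij_betwE by blast

lemma tree_aut_inj_on: "tree_aut d g \<Longrightarrow> inj_on g (words d)"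
  by (simp add: tree_aut_def bij_betw_def)

lemma tree_aut_adj_iff:
  "tree_aut d g \<Longrightarrow> v \<in> words d \<Longrightarrow> w \<in> words d \<Longrightarrow> tree_adj d (g v) (g w) \<longleftrightarrow> tree_adj d v w"
  by (simp add: tree_aut_def)

lemma tree_aut_nbrs:
  assumes g: "tree_aut d g" and v: "v \<in> words d"
  shows "g ` tree_nbrs d v = tree_nbrs d (g v)"
proof (intro equalityI subsetI)
  fix x assume x: "x \<in> tree_nbrs d (g v)"
  have "words d = g ` words d" using g by (simp add: tree_aut_def bij_betw_def)
  then obtain w where "w \<in> words d" "x = g w"
    using x by (auto simp: tree_nbrs_def)
  then show "x \<in> g ` tree_nbrs d v"
    using x tree_aut_adj_iff[OF g v] by (auto simp: tree_nbrs_def)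
qed (use tree_aut_words[OF g] tree_aut_adj_iff[OF g v] in \<open>auto simp: tree_nbrs_def\<close>)

text \<open>The root is the only vertex with \<open>d\<close> rather than \<open>d + 1\<close> neighbours.\<close>
lemma tree_aut_root:
  assumes g: "tree_aut d g" and d: "d \<ge> 1"
  shows "g [] = []"
proof (rule ccontr)
  assume "g [] \<noteq> []"
  have "inj_on g (tree_nbrs d [])"
    using tree_aut_inj_on[OF g] by (rule inj_on_subset) (auto simp: tree_nbrs_def)
  then have "card (tree_nbrs d (g [])) = card (tree_nbrs d [])"
    using tree_aut_nbrs[OF g words_Nil] card_image by metis
  with \<open>g [] \<noteq> []\<close> show False
    using card_tree_nbrs[OF tree_aut_words[OF g words_Nil]] card_tree_nbrs[OF words_Nil] by simp
qed

lemma tree_adj_shorter: "tree_adj d v w \<Longrightarrow> length v = Suc (length w) \<Longrightarrow> w = butlast v"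
  by (auto simp: tree_adj_def)

lemma tree_adj_length: "tree_adj d v w \<Longrightarrow> length w = Suc (length v) \<or> length v = Suc (length w)"
  by (auto simp: tree_adj_def)

lemma tree_aut_length:
  assumes g: "tree_aut d g" and d: "d \<ge> 1" and w: "w \<in> words d"
  shows "length (g w) = length w"
  using w
proof (induction "length w" arbitrary: w rule: less_induct)
  case less
  show ?case
  proof (cases w rule: rev_cases)
    case Nil
    then show ?thesis using tree_aut_root[OF g d] by simp
  next
    case (snoc p i)
    have p: "p \<in> words d" and i: "i \<in> {1..d}" using less.prems snoc by auto
    have lp: "length (g p) = length p" using less p snoc by simp
    have "tree_adj d (g p) (g w)"
      using tree_aut_adj_iff[OF g p less.prems] i snoc by (auto simp: tree_adj_def)
    moreover have "length (g p) \<noteq> Suc (length (g w))"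
    proof
      assume short: "length (g p) = Suc (length (g w))"
      then obtain q i' where q: "p = q @ [i']"
        using lp by (cases p rule: rev_cases) auto
      have q_words: "q \<in> words d" and i': "i' \<in> {1..d}" using p q by auto
      have "length (g q) = length q" using less q_words q snoc by simp
      moreover have "tree_adj d (g p) (g q)"
        using tree_aut_adj_iff[OF g p q_words] i' q by (auto simp: tree_adj_def)
      ultimately have "g q = butlast (g p)" using lp q by (simp add: tree_adj_shorter)
      moreover have "g w = butlast (g p)"
        using \<open>tree_adj d (g p) (g w)\<close> short by (simp add: tree_adj_shorter)
      ultimately have "q = w"
        using inj_onD[OF tree_aut_inj_on[OF g] _ q_words less.prems] by simp
      then show False using q snoc by simp
    qed
    ultimately show ?thesis using lp snoc tree_adj_length by fastforce
  qed
qed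

lemma tree_aut_snoc:
  assumes g: "tree_aut d g" and d: "d \<ge> 1" and w: "w \<in> words d" and i: "i \<in> {1..d}"
  shows "\<exists>a. g (w @ [i]) = g w @ [a]"
proof -
  have wi: "w @ [i] \<in> words d" using w i by simp
  have "tree_adj d (g w) (g (w @ [i]))"
    using tree_aut_adj_iff[OF g w wi] i by (auto simp: tree_adj_def)
  moreover have "length (g (w @ [i])) = Suc (length (g w))"
    using tree_aut_length[OF g d w] tree_aut_length[OF g d wi] by simp
  ultimately show ?thesis by (auto simp: tree_adj_def)
qed

lemma bact_prefix:
  assumes g: "tree_aut d g" and d: "d \<ge> 1" and x: "x \<in> cantor d"
  shows "g (map x [0..<n]) = map (bact g x) [0..<n]"
proof (induction n)
  case 0
  then show ?case using tree_aut_root[OF g d] by simp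
next
  case (Suc n)
  have "x n \<in> {1..d}" using x by (simp add: cantor_def)
  then obtain a where a: "g (map x [0..<n] @ [x n]) = g (map x [0..<n]) @ [a]"
    using tree_aut_snoc[OF g d cantor_prefix_in_words[OF x]] by blast
  then have "bact g x n = a" using Suc by (simp add: bact_def nth_append)
  then show ?case using a Suc by simp
qed

lemma bact_inj_on:
  assumes g: "tree_aut d g" and d: "d \<ge> 1"
  shows "inj_on (bact g) (cantor d)"
proof (rule inj_onI, rule ext)
  fix x y n assume x: "x \<in> cantor d" and y: "y \<in> cantor d" and eq: "bact g x = bact g y"
  have "g (map x [0..<Suc n]) = g (map y [0..<Suc n])"
    using bact_prefix[OF g d x] bact_prefix[OF g d y] eq by metis
  then have "map x [0..<Suc n] = map y [0..<Suc n]"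
    using inj_onD[OF tree_aut_inj_on[OF g]] cantor_prefix_in_words x y by blast
  then show "x n = y n" by simp
qed

section \<open>Cone partitions and the elements of \<open>V\<^sub>d({id})\<close>\<close>

definition cone_partition :: "nat \<Rightarrow> nat \<Rightarrow> (nat \<Rightarrow> nat list) \<Rightarrow> bool" where
  "cone_partition d n w \<longleftrightarrow> (\<forall>k<n. w k \<in> words d)
     \<and> (\<forall>k<n. \<forall>l<n. k \<noteq> l \<longrightarrow> cone d (w k) \<inter> cone d (w l) = {})
     \<and> (\<Union>k<n. cone d (w k)) = cantor d"

lemma V_data_iff:
  "V_data d G f n wp wm j gs \<longleftrightarrow> (\<forall>k<n. gs k \<in> G)
     \<and> cone_partition d n wp \<and> cone_partition d n wm \<and> bij_betw j {..<n} {..<n}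
     \<and> (\<forall>k<n. \<forall>\<kappa>\<in>cantor d. f (hw (wp k) \<kappa>) = hw (wm (j k)) (bact (gs k) \<kappa>))
     \<and> (\<forall>\<kappa>. \<kappa> \<notin> cantor d \<longrightarrow> f \<kappa> = \<kappa>)"
  by (auto simp: V_data_def cone_partition_def)

lemma cone_partition_words: "cone_partition d n w \<Longrightarrow> k < n \<Longrightarrow> w k \<in> words d"
  by (simp add: cone_partition_def)

lemma cone_partitionE:
  assumes "cone_partition d n w" "x \<in> cantor d"
  obtains k where "k < n" "x \<in> cone d (w k)"
  using assms unfolding cone_partition_def by blast

lemma cone_partition_unique:
  "cone_partition d n w \<Longrightarrow> k < n \<Longrightarrow> l < n \<Longrightarrow> x \<in> cone d (w k) \<Longrightarrow> x \<in> cone d (w l) \<Longrightarrow> k = l"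
  unfolding cone_partition_def by blast

lemma bact_id [simp]: "bact id \<kappa> = \<kappa>"
  by (simp add: bact_def fun_eq_iff del: upt_Suc)

lemma Vgrp_fixes_outside: "f \<in> Vgrp d G \<Longrightarrow> x \<notin> cantor d \<Longrightarrow> f x = x"
  by (auto simp: Vgrp_def V_data_def)

lemma Vgrp_trivialE:
  assumes "f \<in> Vgrp d {id}"
  obtains n wp wm j where "cone_partition d n wp" "cone_partition d n wm" "bij_betw j {..<n} {..<n}"
    "\<forall>k<n. \<forall>\<kappa>\<in>cantor d. f (hw (wp k) \<kappa>) = hw (wm (j k)) \<kappa>"
    "\<forall>\<kappa>. \<kappa> \<notin> cantor d \<longrightarrow> f \<kappa> = \<kappa>"
proof -
  obtain n wp wm j gs where "V_data d {id} f n wp wm j gs"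
    using assms by (auto simp: Vgrp_def)
  then show ?thesis by (intro that[of n wp wm j]) (auto simp: V_data_iff)
qed

lemma Vgrp_trivial_on_cone:
  assumes "cone_partition d n wp" "cone_partition d n wm"
    and "\<forall>k<n. \<forall>\<kappa>\<in>cantor d. f (hw (wp k) \<kappa>) = hw (wm (j k)) \<kappa>"
    and "k < n" "x \<in> cone d (wp k)"
  shows "f x = hw (wm (j k)) (shift (length (wp k)) x)"
  using assms(3) assms(4) shift_cone_in_cantor[OF assms(5)] hw_shift_cone[OF assms(5)] by metis

lemma Vgrp_trivial_cantor:
  assumes "f \<in> Vgrp d {id}" "x \<in> cantor d"
  shows "f x \<in> cantor d"
proof -
  obtain n wp wm j where P: "cone_partition d n wp" "cone_partition d n wm"
    and j: "bij_betw j {..<n} {..<n}"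
    and f: "\<forall>k<n. \<forall>\<kappa>\<in>cantor d. f (hw (wp k) \<kappa>) = hw (wm (j k)) \<kappa>"
    and "\<forall>\<kappa>. \<kappa> \<notin> cantor d \<longrightarrow> f \<kappa> = \<kappa>"
    using assms(1) by (rule Vgrp_trivialE)
  obtain k where k: "k < n" "x \<in> cone d (wp k)" using cone_partitionE[OF P(1) assms(2)] .
  have "j k < n" using bij_betwE[OF j] k(1) by blast
  then show ?thesis
    unfolding Vgrp_trivial_on_cone[OF P f k]
    using hw_in_cantor cone_partition_words[OF P(2)] shift_cone_in_cantor[OF k(2)] by blast
qed

lemma Vgrp_trivial_inj_on:
  assumes "f \<in> Vgrp d {id}"
  shows "inj_on f (cantor d)"
proof (rule inj_onI)
  obtain n wp wm j where P: "cone_partition d n wp" "cone_partition d n wm"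
    and j: "bij_betw j {..<n} {..<n}"
    and f: "\<forall>k<n. \<forall>\<kappa>\<in>cantor d. f (hw (wp k) \<kappa>) = hw (wm (j k)) \<kappa>"
    and "\<forall>\<kappa>. \<kappa> \<notin> cantor d \<longrightarrow> f \<kappa> = \<kappa>"
    using assms by (rule Vgrp_trivialE)
  fix x y assume x: "x \<in> cantor d" and y: "y \<in> cantor d" and eq: "f x = f y"
  obtain k where k: "k < n" "x \<in> cone d (wp k)" using cone_partitionE[OF P(1) x] .
  obtain l where l: "l < n" "y \<in> cone d (wp l)" using cone_partitionE[OF P(1) y] .
  have fx: "f x = hw (wm (j k)) (shift (length (wp k)) x)"
    and fy: "f y = hw (wm (j l)) (shift (length (wp l)) y)"
    using Vgrp_trivial_on_cone[OF P f k] Vgrp_trivial_on_cone[OF P f l] by blast+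
  have jkl: "j k < n" "j l < n" using bij_betwE[OF j] k(1) l(1) by auto
  have "f x \<in> cone d (wm (j k))"
    unfolding fx using hw_in_cone cone_partition_words[OF P(2) jkl(1)]
      shift_cone_in_cantor[OF k(2)] by blast
  moreover have "f x \<in> cone d (wm (j l))"
    unfolding eq fy using hw_in_cone cone_partition_words[OF P(2) jkl(2)]
      shift_cone_in_cantor[OF l(2)] by blast
  ultimately have "j k = j l" using cone_partition_unique[OF P(2) jkl] by blast
  then have "k = l" using j k l by (auto simp: bij_betw_def inj_on_def)
  then have "hw (wm (j k)) (shift (length (wp k)) x) = hw (wm (j k)) (shift (length (wp k)) y)"
    using fx fy eq by simp
  then have shift_eq: "shift (length (wp k)) x = shift (length (wp k)) y"
    by (rule hw_inj)
  have "x = hw (wp k) (shift (length (wp k)) x)" using hw_shift_cone[OF k(2)] by simp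
  also have "\<dots> = hw (wp l) (shift (length (wp l)) y)" using shift_eq \<open>k = l\<close> by simp
  also have "\<dots> = y" by (rule hw_shift_cone[OF l(2)])
  finally show "x = y" .
qed

lemma Vgrp_trivial_onto_cantor:
  assumes "f \<in> Vgrp d {id}" "y \<in> cantor d"
  shows "y \<in> f ` cantor d"
proof -
  obtain n wp wm j where P: "cone_partition d n wp" "cone_partition d n wm"
    and j: "bij_betw j {..<n} {..<n}"
    and f: "\<forall>k<n. \<forall>\<kappa>\<in>cantor d. f (hw (wp k) \<kappa>) = hw (wm (j k)) \<kappa>"
    and "\<forall>\<kappa>. \<kappa> \<notin> cantor d \<longrightarrow> f \<kappa> = \<kappa>"
    using assms(1) by (rule Vgrp_trivialE)
  obtain l where l: "l < n" "y \<in> cone d (wm l)" using cone_partitionE[OF P(2) assms(2)] .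
  then obtain k where k: "k < n" "j k = l" using j by (metis bij_betw_def imageE lessThan_iff)
  then have "f (hw (wp k) (shift (length (wm l)) y)) = y"
    using f shift_cone_in_cantor[OF l(2)] hw_shift_cone[OF l(2)] by simp
  moreover have "hw (wp k) (shift (length (wm l)) y) \<in> cantor d"
    using hw_in_cantor cone_partition_words[OF P(1) k(1)] shift_cone_in_cantor[OF l(2)] by blast
  ultimately show ?thesis by (metis image_eqI)
qed

lemma Vgrp_trivial_bij:
  assumes "f \<in> Vgrp d {id}"
  shows "bij f"
proof -
  have out: "f x = x" if "x \<notin> cantor d" for x
    using assms that by (rule Vgrp_fixes_outside)
  have cantor_iff: "f x \<in> cantor d \<longleftrightarrow> x \<in> cantor d" for x
    using out[of x] Vgrp_trivial_cantor[OF assms, of x] by (cases "x \<in> cantor d") auto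
  have "inj f"
  proof (rule injI)
    fix x y assume eq: "f x = f y"
    then have "x \<in> cantor d \<longleftrightarrow> y \<in> cantor d" using cantor_iff by metis
    then show "x = y"
      using eq out[of x] out[of y] Vgrp_trivial_inj_on[OF assms]
      by (cases "x \<in> cantor d") (auto simp: inj_on_def)
  qed
  moreover have "y \<in> range f" for y
  proof (cases "y \<in> cantor d")
    case True
    then show ?thesis using Vgrp_trivial_onto_cantor[OF assms] by blast
  next
    case False
    then show ?thesis using out[OF False] by (metis rangeI)
  qed
  ultimately show ?thesis by (auto simp: bij_def)
qed

section \<open>Extending elements of \<open>F\<^sub>d\<close> into a cone\<close>

lemma lex_less_head_le: "lex_less x y \<Longrightarrow> x 0 \<le> y 0"
  unfolding lex_less_def by (metis gr0I le_eq_less_or_eq)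

lemma lex_less_head: "x 0 < y 0 \<Longrightarrow> lex_less x y"
  unfolding lex_less_def by (rule exI[of _ 0]) simp

lemma lex_less_second: "x 0 = y 0 \<Longrightarrow> x 1 < y 1 \<Longrightarrow> lex_less x y"
  unfolding lex_less_def by (rule exI[of _ 1]) (auto simp: less_Suc_eq)

lemma lex_less_shift:
  assumes "lex_less x y" "x 0 = y 0"
  shows "lex_less (shift 1 x) (shift 1 y)"
proof -
  obtain n where n: "\<forall>m<n. x m = y m" "x n < y n" using assms(1) by (auto simp: lex_less_def)
  then obtain n' where "n = Suc n'" using assms(2) by (cases n) auto
  then show ?thesis using n by (auto simp: lex_less_def shift_def intro!: exI[of _ n'])
qed

lemma lex_less_hw:
  assumes "lex_less a b"
  shows "lex_less (hw w a) (hw w b)"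
proof -
  obtain n where n: "\<forall>m<n. a m = b m" "a n < b n" using assms by (auto simp: lex_less_def)
  then show ?thesis by (auto simp: lex_less_def hw_def intro!: exI[of _ "n + length w"])
qed

definition localize :: "nat \<Rightarrow> nat list \<Rightarrow> ((nat \<Rightarrow> nat) \<Rightarrow> (nat \<Rightarrow> nat)) \<Rightarrow> (nat \<Rightarrow> nat) \<Rightarrow> (nat \<Rightarrow> nat)" where
  "localize d w \<theta> x = (if x \<in> cone d w then hw w (\<theta> (shift (length w) x)) else x)"

lemma localize_outside: "x \<notin> cone d w \<Longrightarrow> localize d w \<theta> x = x"
  by (simp add: localize_def)

lemma localize_hw: "w \<in> words d \<Longrightarrow> a \<in> cantor d \<Longrightarrow> localize d w \<theta> (hw w a) = hw w (\<theta> a)"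
  by (simp add: localize_def hw_in_cone)

lemma localize_single:
  "localize d [c] \<theta> x = (if x \<in> cantor d \<and> x 0 = c then hw [c] (\<theta> (shift 1 x)) else x)"
  by (simp add: localize_def cone_single)

lemma localize_Nil: "(\<And>x. x \<notin> cantor d \<Longrightarrow> \<theta> x = x) \<Longrightarrow> localize d [] \<theta> = \<theta>"
  by (auto simp: localize_def fun_eq_iff)

lemma localize_Cons: "localize d (c # w) \<theta> = localize d [c] (localize d w \<theta>)"
proof
  fix x
  show "localize d (c # w) \<theta> x = localize d [c] (localize d w \<theta>) x"
  proof (cases "x \<in> cantor d \<and> x 0 = c")
    case x: True
    show ?thesis
    proof (cases "shift 1 x \<in> cone d w")
      case True
      have "localize d w \<theta> (shift 1 x) = hw w (\<theta> (shift (length w) (shift 1 x)))"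
        using True by (simp add: localize_def)
      then have "localize d [c] (localize d w \<theta>) x = hw [c] (hw w (\<theta> (shift (length w) (shift 1 x))))"
        using x by (simp add: localize_single)
      also have "\<dots> = localize d (c # w) \<theta> x"
        using x True by (simp add: localize_def cone_Cons hw_append shift_shift)
      finally show ?thesis ..
    next
      case False
      have "localize d [c] (localize d w \<theta>) x = hw [c] (shift 1 x)"
        using x False by (simp add: localize_single localize_outside)
      also have "\<dots> = x" using x hw_single_shift by metis
      finally show ?thesis using False by (simp add: localize_def cone_Cons)
    qed
  next
    case False
    then have "x \<notin> cone d (c # w)" by (auto simp: cone_Cons)
    then show ?thesis using False by (auto simp: localize_outside localize_single)
  qed
qed

definition other_letter :: "nat \<Rightarrow> nat \<Rightarrow> nat" where
  "other_letter c i = (if i + 1 < c then i + 1 else i + 2)"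

definition graft :: "nat \<Rightarrow> nat \<Rightarrow> (nat \<Rightarrow> nat list) \<Rightarrow> nat \<Rightarrow> nat list" where
  "graft c n a k = (if k < n then c # a k else [other_letter c (k - n)])"

lemma other_letter_range: "c \<in> {1..d} \<Longrightarrow> i < d - 1 \<Longrightarrow> other_letter c i \<in> {1..d} - {c}"
  by (auto simp: other_letter_def)

lemma other_letter_inj: "other_letter c i = other_letter c i' \<Longrightarrow> i = i'"
  by (auto simp: other_letter_def split: if_splits)

lemma other_letter_surj:
  assumes "a \<in> {1..d}" "c \<in> {1..d}" "a \<noteq> c"
  shows "\<exists>i<d - 1. other_letter c i = a"
proof (cases "a < c")
  case True
  then show ?thesis using assms by (intro exI[of _ "a - 1"]) (auto simp: other_letter_def)
next
  case False
  then show ?thesis using assms by (intro exI[of _ "a - 2"]) (auto simp: other_letter_def)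
qed

lemma graft_disjoint:
  assumes a: "cone_partition d n a" and c: "c \<in> {1..d}"
    and k: "k < n + (d - 1)" and l: "l < n + (d - 1)" and "k \<noteq> l"
  shows "cone d (graft c n a k) \<inter> cone d (graft c n a l) = {}"
proof -
  have other: "other_letter c (i - n) \<noteq> c" if "i < n + (d - 1)" "\<not> i < n" for i
    using other_letter_range[OF c] that by auto
  consider "k < n" "l < n" | "k < n" "\<not> l < n" | "\<not> k < n" "l < n" | "\<not> k < n" "\<not> l < n"
    by blast
  then show ?thesis
  proof cases
    case 1
    then show ?thesis
      using a \<open>k \<noteq> l\<close> by (simp add: graft_def cone_partition_def cone_Cons_disjoint)
  next
    case 2
    then show ?thesis using other[OF l] by (simp add: graft_def cone_Cons_Cons_disjoint)
  next
    case 3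
    then show ?thesis using other[OF k] by (simp add: graft_def cone_Cons_Cons_disjoint)
  next
    case 4
    then have "other_letter c (k - n) \<noteq> other_letter c (l - n)"
      using other_letter_inj \<open>k \<noteq> l\<close> by fastforce
    then show ?thesis using 4 by (simp add: graft_def cone_Cons_Cons_disjoint)
  qed
qed

lemma graft_covers:
  assumes a: "cone_partition d n a" and c: "c \<in> {1..d}" and x: "x \<in> cantor d"
  shows "\<exists>k<n + (d - 1). x \<in> cone d (graft c n a k)"
proof (cases "x 0 = c")
  case True
  obtain k where "k < n" "shift 1 x \<in> cone d (a k)"
    using cone_partitionE[OF a shift_in_cantor[OF x]] .
  then show ?thesis using x True by (auto simp: graft_def cone_Cons intro!: exI[of _ k])
next
  case False
  obtain i where "i < d - 1" "other_letter c i = x 0"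
    using other_letter_surj[OF _ c False] x by (auto simp: cantor_def)
  then show ?thesis using x by (auto simp: graft_def cone_single intro!: exI[of _ "n + i"])
qed

lemma cone_partition_graft:
  assumes a: "cone_partition d n a" and c: "c \<in> {1..d}"
  shows "cone_partition d (n + (d - 1)) (graft c n a)"
proof -
  have "graft c n a k \<in> words d" if "k < n + (d - 1)" for k
    using that c cone_partition_words[OF a] other_letter_range[OF c, of "k - n"]
    by (auto simp: graft_def words_def)
  moreover have "(\<Union>k<n + (d - 1). cone d (graft c n a k)) = cantor d"
    using graft_covers[OF a c] cone_subset_cantor by blast
  ultimately show ?thesis
    using graft_disjoint[OF a c] unfolding cone_partition_def by blast
qed

lemma Fgrp_intro:
  assumes "cone_partition d n wp" "cone_partition d n wm" "bij_betw j {..<n} {..<n}"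
    and "\<forall>k<n. \<forall>\<kappa>\<in>cantor d. \<phi> (hw (wp k) \<kappa>) = hw (wm (j k)) \<kappa>"
    and "\<forall>\<kappa>. \<kappa> \<notin> cantor d \<longrightarrow> \<phi> \<kappa> = \<kappa>"
    and "\<forall>\<kappa>\<in>cantor d. \<forall>\<mu>\<in>cantor d. lex_less \<kappa> \<mu> \<longrightarrow> lex_less (\<phi> \<kappa>) (\<phi> \<mu>)"
  shows "\<phi> \<in> Fgrp d"
proof -
  have "V_data d {id} \<phi> n wp wm j (\<lambda>_. id)" using assms(1-5) by (simp add: V_data_iff)
  then show ?thesis using assms(6) unfolding Fgrp_def Vgrp_def by blast
qed

lemma bij_betw_extend_id:
  fixes n m :: nat
  assumes "bij_betw j {..<n} {..<n}"
  shows "bij_betw (\<lambda>k. if k < n then j k else k) {..<n + m} {..<n + m}"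
proof -
  have "bij_betw (\<lambda>k. if k \<in> {..<n} then j k else id k) ({..<n} \<union> {n..<n + m}) ({..<n} \<union> {n..<n + m})"
    by (rule bij_betw_disjoint_Un[OF assms bij_betw_id]) auto
  moreover have "{..<n} \<union> {n..<n + m} = {..<n + m}" by auto
  ultimately show ?thesis by (simp cong: if_cong)
qed

lemma localize_single_cones:
  assumes c: "c \<in> {1..d}" and wp: "cone_partition d n wp" and j: "bij_betw j {..<n} {..<n}"
    and \<theta>: "\<forall>k<n. \<forall>\<kappa>\<in>cantor d. \<theta> (hw (wp k) \<kappa>) = hw (wm (j k)) \<kappa>"
    and k: "k < n + (d - 1)" and \<kappa>: "\<kappa> \<in> cantor d"
  shows "localize d [c] \<theta> (hw (graft c n wp k) \<kappa>)
    = hw (graft c n wm (if k < n then j k else k)) \<kappa>"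
proof (cases "k < n")
  case True
  have "hw (graft c n wp k) \<kappa> = hw [c] (hw (wp k) \<kappa>)"
    using True by (simp add: graft_def hw_append)
  then have "localize d [c] \<theta> (hw (graft c n wp k) \<kappa>) = hw [c] (\<theta> (hw (wp k) \<kappa>))"
    using True c \<kappa> cone_partition_words[OF wp] localize_hw[of "[c]" d] hw_in_cantor by simp
  also have "\<dots> = hw (graft c n wm (if k < n then j k else k)) \<kappa>"
    using True \<theta> \<kappa> bij_betwE[OF j] by (simp add: graft_def hw_append)
  finally show ?thesis .
next
  case False
  then have "other_letter c (k - n) \<noteq> c" using other_letter_range[OF c] k by auto
  then show ?thesis using False by (simp add: graft_def localize_single hw_def)
qed

lemma localize_single_lex:
  assumes \<theta>: "\<theta> \<in> Fgrp d" and \<kappa>: "\<kappa> \<in> cantor d" and \<mu>: "\<mu> \<in> cantor d"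
    and less: "lex_less \<kappa> \<mu>"
  shows "lex_less (localize d [c] \<theta> \<kappa>) (localize d [c] \<theta> \<mu>)"
proof (cases "\<kappa> 0 = \<mu> 0")
  case True
  show ?thesis
  proof (cases "\<kappa> 0 = c")
    case head_c: True
    then have "lex_less (\<theta> (shift 1 \<kappa>)) (\<theta> (shift 1 \<mu>))"
      using \<theta> lex_less_shift[OF less True] shift_in_cantor \<kappa> \<mu> by (simp add: Fgrp_def)
    then show ?thesis using True head_c \<kappa> \<mu> by (simp add: localize_single lex_less_hw)
  qed (use True less in \<open>simp add: localize_single\<close>)
next
  case False
  have "localize d [c] \<theta> x 0 = x 0" for x by (simp add: localize_single hw_def)
  then show ?thesis
    using False lex_less_head_le[OF less] by (intro lex_less_head) simp
qed

lemma localize_single_Fgrp: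
  assumes c: "c \<in> {1..d}" and \<theta>: "\<theta> \<in> Fgrp d"
  shows "localize d [c] \<theta> \<in> Fgrp d"
proof -
  obtain n wp wm j where P: "cone_partition d n wp" "cone_partition d n wm"
    and j: "bij_betw j {..<n} {..<n}"
    and \<theta>_cones: "\<forall>k<n. \<forall>\<kappa>\<in>cantor d. \<theta> (hw (wp k) \<kappa>) = hw (wm (j k)) \<kappa>"
    and "\<forall>\<kappa>. \<kappa> \<notin> cantor d \<longrightarrow> \<theta> \<kappa> = \<kappa>"
    using \<theta> unfolding Fgrp_def by (auto elim!: Vgrp_trivialE)
  show ?thesis
  proof (rule Fgrp_intro[OF cone_partition_graft[OF P(1) c] cone_partition_graft[OF P(2) c]
        bij_betw_extend_id[OF j]])
    show "\<forall>\<kappa>. \<kappa> \<notin> cantor d \<longrightarrow> localize d [c] \<theta> \<kappa> = \<kappa>"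
      by (simp add: localize_single)
  qed (use localize_single_cones[OF c P(1) j \<theta>_cones] localize_single_lex[OF \<theta>] in auto)
qed

lemma localize_Fgrp:
  assumes "w \<in> words d" "\<theta> \<in> Fgrp d"
  shows "localize d w \<theta> \<in> Fgrp d"
  using assms(1)
proof (induction w)
  case Nil
  have "\<theta> \<in> Vgrp d {id}" using assms(2) by (simp add: Fgrp_def)
  then have "\<forall>\<kappa>. \<kappa> \<notin> cantor d \<longrightarrow> \<theta> \<kappa> = \<kappa>" by (rule Vgrp_trivialE)
  then have "localize d [] \<theta> = \<theta>" by (simp add: localize_Nil)
  then show ?case using assms(2) by simp
next
  case (Cons c w)
  then have "c \<in> {1..d}" "localize d w \<theta> \<in> Fgrp d" by simp_all
  then show ?case unfolding localize_Cons[of d c w] by (rule localize_single_Fgrp)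
qed

section \<open>The generator \<open>x\<^sub>0\<close>\<close>

text \<open>\<open>x\<^sub>0\<close> maps the cones \<open>[i]\<close> (\<open>i < d\<close>), \<open>[d, 1]\<close> and \<open>[d, i]\<close>
  (\<open>i \<ge> 2\<close>) onto \<open>[1, i]\<close>, \<open>[1, d]\<close> and \<open>[i]\<close> respectively.\<close>
definition thompson_x0 :: "nat \<Rightarrow> (nat \<Rightarrow> nat) \<Rightarrow> (nat \<Rightarrow> nat)" where
  "thompson_x0 d x = (if x \<notin> cantor d then x else if x 0 < d then hw [1] x
     else if x 1 = 1 then hw [1, d] (shift 2 x) else shift 1 x)"

lemma hw_single_nth [simp]: "hw [a] x 0 = a" "hw [a] x (Suc n) = x n"
  by (simp_all add: hw_def)

lemma hw_pair_nth [simp]: "hw [a, b] x 0 = a" "hw [a, b] x (Suc 0) = b"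
  by (simp_all add: hw_def)

lemma shift_hw_pair [simp]: "shift 2 (hw [a, b] x) = x" "shift (Suc 0) (hw [a, b] x) = hw [b] x"
  by (auto simp: hw_def shift_def fun_eq_iff nth_Cons split: nat.split)

lemma cone_partition_letters: "cone_partition d d (\<lambda>k. [Suc k])"
  unfolding cone_partition_def
proof (intro conjI allI impI)
  show "(\<Union>k<d. cone d [Suc k]) = cantor d"
  proof (intro equalityI subsetI)
    fix x assume x: "x \<in> cantor d"
    then have "x 0 \<in> {1..d}" by (simp add: cantor_def)
    then show "x \<in> (\<Union>k<d. cone d [Suc k])"
      using x by (auto simp: cone_single intro!: bexI[of _ "x 0 - 1"])
  qed (use cone_subset_cantor in blast)
qed (auto simp: cone_Cons_Cons_disjoint)

text \<open>Enumerating the cones of \<open>x\<^sub>0\<close> by \<open>graft d d\<close> on the domain side and by \<open>graft 1 d\<close>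
  on the range side, \<open>x0_perm\<close> is the induced permutation of indices.\<close>
definition x0_perm :: "nat \<Rightarrow> nat \<Rightarrow> nat" where
  "x0_perm d k = (if k = 0 then d - 1 else if k < d then d + k - 1 else k - d)"

lemma bij_x0_perm:
  assumes "d \<ge> 1"
  shows "bij_betw (x0_perm d) {..<d + (d - 1)} {..<d + (d - 1)}"
proof -
  have "inj_on (x0_perm d) {..<d + (d - 1)}"
    by (auto simp: inj_on_def x0_perm_def split: if_splits)
  moreover have "x0_perm d ` {..<d + (d - 1)} \<subseteq> {..<d + (d - 1)}"
    using assms by (auto simp: x0_perm_def)
  ultimately show ?thesis by (simp add: bij_betw_def endo_inj_surj)
qed

lemma thompson_x0_cones:
  assumes d: "d \<ge> 2" and k: "k < d + (d - 1)" and \<kappa>: "\<kappa> \<in> cantor d"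
  shows "thompson_x0 d (hw (graft d d (\<lambda>k. [Suc k]) k) \<kappa>)
    = hw (graft 1 d (\<lambda>k. [Suc k]) (x0_perm d k)) \<kappa>"
proof -
  have in_cantor: "hw w \<kappa> \<in> cantor d" if "set w \<subseteq> {1..d}" for w
    using hw_in_cantor[OF _ \<kappa>] that by (simp add: words_def)
  consider "k = 0" | "0 < k" "k < d" | "d \<le> k" by linarith
  then show ?thesis
  proof cases
    case 1
    then show ?thesis
      using d in_cantor[of "[d, 1]"] by (simp add: graft_def x0_perm_def thompson_x0_def)
  next
    case 2
    then show ?thesis
      using d in_cantor[of "[d, Suc k]"]
      by (auto simp: graft_def x0_perm_def thompson_x0_def other_letter_def)
  next
    case 3
    then have "graft d d (\<lambda>k. [Suc k]) k = [Suc (k - d)]"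
      and "graft 1 d (\<lambda>k. [Suc k]) (x0_perm d k) = [1, Suc (k - d)]"
      using k by (auto simp: graft_def other_letter_def x0_perm_def)
    moreover have "Suc (k - d) < d" using k 3 by linarith
    ultimately show ?thesis
      using in_cantor[of "[Suc (k - d)]"] by (simp add: thompson_x0_def hw_append)
  qed
qed

lemma thompson_x0_lex_below_d:
  assumes \<kappa>: "\<kappa> \<in> cantor d" and \<mu>: "\<mu> \<in> cantor d" and less: "lex_less \<kappa> \<mu>"
    and \<kappa>0: "\<kappa> 0 < d"
  shows "lex_less (thompson_x0 d \<kappa>) (thompson_x0 d \<mu>)"
proof -
  have \<mu>_le: "\<mu> n \<in> {1..d}" for n using \<mu> by (simp add: cantor_def)
  consider "\<mu> 0 < d" | "\<mu> 0 = d" "\<mu> 1 = 1" | "\<mu> 0 = d" "\<mu> 1 \<noteq> 1"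
    using \<mu>_le[of 0] by fastforce
  then show ?thesis
  proof cases
    case 1
    then show ?thesis using \<kappa>0 \<kappa> \<mu> less by (simp add: thompson_x0_def lex_less_hw)
  next
    case 2
    then show ?thesis using \<kappa>0 \<kappa> \<mu> by (simp add: thompson_x0_def lex_less_second)
  next
    case 3
    then have "1 < \<mu> 1" using \<mu>_le[of 1] by simp
    then show ?thesis using \<kappa>0 3 \<kappa> \<mu> by (simp add: thompson_x0_def lex_less_head shift_def)
  qed
qed

lemma thompson_x0_lex:
  assumes \<kappa>: "\<kappa> \<in> cantor d" and \<mu>: "\<mu> \<in> cantor d" and less: "lex_less \<kappa> \<mu>"
  shows "lex_less (thompson_x0 d \<kappa>) (thompson_x0 d \<mu>)"
proof -
  have \<kappa>_le: "\<kappa> n \<in> {1..d}" and \<mu>_le: "\<mu> n \<in> {1..d}" for n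
    using \<kappa> \<mu> by (simp_all add: cantor_def)
  consider (low) "\<kappa> 0 < d" | (high) "\<kappa> 0 = d" "\<mu> 0 = d"
    using lex_less_head_le[OF less] \<kappa>_le[of 0] \<mu>_le[of 0] by fastforce
  then show ?thesis
  proof cases
    case low
    then show ?thesis using thompson_x0_lex_below_d[OF \<kappa> \<mu> less] by blast
  next
    case high
    have tail: "lex_less (shift 1 \<kappa>) (shift 1 \<mu>)" using lex_less_shift[OF less] high by simp
    have "\<kappa> 1 \<le> \<mu> 1" using lex_less_head_le[OF tail] by (simp add: shift_def)
    consider (both) "\<kappa> 1 = 1" "\<mu> 1 = 1" | (left) "\<kappa> 1 = 1" "\<mu> 1 \<noteq> 1"
      | (neither) "\<kappa> 1 \<noteq> 1" "\<mu> 1 \<noteq> 1"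
      using \<open>\<kappa> 1 \<le> \<mu> 1\<close> \<kappa>_le[of 1] by fastforce
    then show ?thesis
    proof cases
      case both
      have "shift 1 \<kappa> 0 = shift 1 \<mu> 0" using both by (simp add: shift_def)
      then have "lex_less (shift 1 (shift 1 \<kappa>)) (shift 1 (shift 1 \<mu>))"
        by (rule lex_less_shift[OF tail])
      then have "lex_less (shift 2 \<kappa>) (shift 2 \<mu>)" by (simp add: shift_shift numeral_2_eq_2)
      then show ?thesis using both high \<kappa> \<mu> by (simp add: thompson_x0_def lex_less_hw)
    next
      case left
      then have "1 < \<mu> 1" using \<mu>_le[of 1] by simp
      then show ?thesis using high left \<kappa> \<mu> by (simp add: thompson_x0_def lex_less_head shift_def)
    next
      case neither
      then show ?thesis using high tail \<kappa> \<mu> by (simp add: thompson_x0_def)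
    qed
  qed
qed

lemma thompson_x0_Fgrp:
  assumes d: "d \<ge> 2"
  shows "thompson_x0 d \<in> Fgrp d"
proof -
  have "cone_partition d (d + (d - 1)) (graft c d (\<lambda>k. [Suc k]))" if "c \<in> {1..d}" for c
    using cone_partition_graft[OF cone_partition_letters that] .
  then have "cone_partition d (d + (d - 1)) (graft d d (\<lambda>k. [Suc k]))"
    and "cone_partition d (d + (d - 1)) (graft 1 d (\<lambda>k. [Suc k]))"
    using d by auto
  then show ?thesis
  proof (rule Fgrp_intro[OF _ _ bij_x0_perm])
    show "\<forall>\<kappa>. \<kappa> \<notin> cantor d \<longrightarrow> thompson_x0 d \<kappa> = \<kappa>" by (simp add: thompson_x0_def)
  qed (use d thompson_x0_cones thompson_x0_lex in auto)
qed

section \<open>Non-trivial elements of \<open>V\<^sub>d(G)\<close> displace a cone\<close>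

lemma Vgrp_local_form:
  assumes "f \<in> Vgrp d G" "\<kappa> \<in> cantor d"
  obtains p q g where "\<kappa> \<in> cone d p" "g \<in> G"
    "\<forall>x\<in>cone d p. f x = hw q (bact g (shift (length p) x))"
proof -
  obtain n wp wm j gs where V: "V_data d G f n wp wm j gs"
    using assms(1) by (auto simp: Vgrp_def)
  then obtain k where k: "k < n" "\<kappa> \<in> cone d (wp k)"
    using cone_partitionE[OF _ assms(2)] by (auto simp: V_data_iff)
  have "f x = hw (wm (j k)) (bact (gs k) (shift (length (wp k)) x))" if "x \<in> cone d (wp k)" for x
    using V k(1) shift_cone_in_cantor[OF that] hw_shift_cone[OF that] unfolding V_data_iff by metis
  then show ?thesis using that[of "wp k" "gs k"] V k by (auto simp: V_data_iff)
qed

lemma bact_nth_eq: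
  assumes "\<forall>i\<le>n. x i = y i"
  shows "bact g x n = bact g y n"
proof -
  have "map x [0..<Suc n] = map y [0..<Suc n]"
    using assms by (simp add: map_eq_conv less_Suc_eq_le del: upt_Suc)
  then show ?thesis by (simp only: bact_def)
qed

lemma hw_bact_shift_nth_eq:
  assumes "\<forall>i<m + n + 1. x i = y i"
  shows "hw q (bact g (shift m x)) n = hw q (bact g (shift m y)) n"
proof (cases "n < length q")
  case False
  have "bact g (shift m x) (n - length q) = bact g (shift m y) (n - length q)"
    using assms by (intro bact_nth_eq) (auto simp: shift_def)
  then show ?thesis using False by (simp add: hw_def)
qed (simp add: hw_def)

lemma inj_on_cone_local_map:
  assumes g: "tree_aut d g" and d: "d \<ge> 1"
  shows "inj_on (\<lambda>x. hw q (bact g (shift (length p) x))) (cone d p)"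
proof (rule inj_onI)
  fix x y assume x: "x \<in> cone d p" and y: "y \<in> cone d p"
  assume "hw q (bact g (shift (length p) x)) = hw q (bact g (shift (length p) y))"
  then have "bact g (shift (length p) x) = bact g (shift (length p) y)"
    by (rule hw_inj)
  then have "shift (length p) x = shift (length p) y"
    using inj_onD[OF bact_inj_on[OF g d]] shift_cone_in_cantor x y by blast
  then show "x = y" using hw_shift_cone[OF x] hw_shift_cone[OF y] by metis
qed

lemma Vgrp_displaces_cone:
  assumes d: "d \<ge> 1" and G: "\<forall>g\<in>G. tree_aut d g" and f: "f \<in> Vgrp d G" and "f \<noteq> id"
  obtains u where "u \<in> words d" "\<forall>x\<in>cone d u. f x \<notin> cone d u" "inj_on f (cone d u)"
proof -
  obtain \<kappa> where moved: "f \<kappa> \<noteq> \<kappa>" using \<open>f \<noteq> id\<close> by (metis eq_id_iff)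
  then have \<kappa>: "\<kappa> \<in> cantor d" using Vgrp_fixes_outside[OF f] by blast
  obtain p q g where p: "\<kappa> \<in> cone d p" and g: "tree_aut d g"
    and local: "\<forall>x\<in>cone d p. f x = hw q (bact g (shift (length p) x))"
    using Vgrp_local_form[OF f \<kappa>] G by metis
  obtain N where N: "f \<kappa> N \<noteq> \<kappa> N" using moved by (metis ext)
  define u where "u = map \<kappa> [0..<length p + N + 1]"
  have cone_u: "x \<in> cone d u \<longleftrightarrow> x \<in> cantor d \<and> (\<forall>i<length p + N + 1. x i = \<kappa> i)" for x
    by (auto simp: cone_def u_def simp del: upt_Suc)
  have u_p: "cone d u \<subseteq> cone d p"
  proof
    fix x assume "x \<in> cone d u"
    then show "x \<in> cone d p" using p unfolding cone_u by (auto simp: cone_def)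
  qed
  have "f x \<notin> cone d u" if x: "x \<in> cone d u" for x
  proof
    assume "f x \<in> cone d u"
    then have "f x N = \<kappa> N" by (simp add: cone_u)
    moreover have "f x N = f \<kappa> N"
    proof -
      have "\<forall>i<length p + N + 1. x i = \<kappa> i" using x cone_u by blast
      then have "hw q (bact g (shift (length p) x)) N = hw q (bact g (shift (length p) \<kappa>)) N"
        by (rule hw_bact_shift_nth_eq)
      then show ?thesis using local p u_p x by auto
    qed
    ultimately show False using N by simp
  qed
  moreover have "inj_on f (cone d p)"
    using inj_on_cong[of "cone d p" f] local inj_on_cone_local_map[OF g d] by auto
  moreover have "u \<in> words d" unfolding u_def by (rule cantor_prefix_in_words[OF \<kappa>])
  ultimately show ?thesis using that inj_on_subset[OF _ u_p] by blast
qed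

section \<open>Infinitely many conjugates\<close>

lemma infinite_Fgrp_supported_in_cone:
  assumes d: "d \<ge> 2" and u: "u \<in> words d"
  shows "infinite {\<phi> \<in> Fgrp d. \<forall>x. x \<notin> cone d u \<longrightarrow> \<phi> x = x}"
proof -
  define w where "w m = u @ replicate m d" for m
  define \<Phi> where "\<Phi> m = localize d (w m) (thompson_x0 d)" for m
  have w: "w m \<in> words d" for m using u d by (auto simp: w_def words_def)
  have supp: "\<Phi> m x = x" if "x \<notin> cone d u" for m x
    using that cone_append_subset[of d u "replicate m d"] localize_outside
    unfolding \<Phi>_def w_def by blast
  define p :: "nat \<Rightarrow> nat" where "p = hw [1] (\<lambda>_. 2)"
  have p: "p \<in> cantor d" using d by (simp add: p_def cantor_def hw_def)
  have "thompson_x0 d p 1 = 1" "p 1 = 2"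
    using p d by (simp_all add: p_def thompson_x0_def)
  then have moved: "thompson_x0 d p \<noteq> p" by auto
  have "\<Phi> m \<noteq> \<Phi> m'" if "m < m'" for m m'
  proof -
    define z where "z = hw (w m) p"
    have "\<Phi> m z = hw (w m) (thompson_x0 d p)"
      using localize_hw[OF w p] by (simp add: \<Phi>_def z_def)
    then have "\<Phi> m z \<noteq> z" using moved hw_inj[of "w m" "thompson_x0 d p" p] z_def by auto
    moreover have "z \<notin> cone d (w m')"
    proof
      assume "z \<in> cone d (w m')"
      then have "z (length u + m) = w m' ! (length u + m)"
        using that by (simp add: cone_def w_def)
      moreover have "z (length u + m) = 1" by (simp add: z_def w_def p_def hw_def)
      ultimately show False using that d by (simp add: w_def nth_append)
    qed
    then have "\<Phi> m' z = z" by (simp add: \<Phi>_def localize_outside)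
    ultimately show ?thesis by auto
  qed
  then have "inj \<Phi>" by (metis injI linorder_neqE_nat)
  moreover have "range \<Phi> \<subseteq> {\<phi> \<in> Fgrp d. \<forall>x. x \<notin> cone d u \<longrightarrow> \<phi> x = x}"
    using localize_Fgrp[OF w thompson_x0_Fgrp[OF d]] supp by (auto simp: \<Phi>_def)
  ultimately show ?thesis unfolding infinite_iff_countable_subset by blast
qed

lemma inv_bij_supported:
  assumes "bij \<phi>" "\<forall>x. x \<notin> U \<longrightarrow> \<phi> x = x"
  shows "x \<notin> U \<Longrightarrow> inv \<phi> x = x" and "x \<in> U \<Longrightarrow> inv \<phi> x \<in> U"
proof -
  show "x \<notin> U \<Longrightarrow> inv \<phi> x = x" using assms by (metis bij_inv_eq_iff)
  show "x \<in> U \<Longrightarrow> inv \<phi> x \<in> U" using assms by (metis bij_inv_eq_iff)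
qed

text \<open>Since \<open>f\<close> moves \<open>U\<close> off itself and \<open>\<phi>\<close> is the identity off \<open>U\<close>, the conjugate
  \<open>\<phi> \<circ> f \<circ> inv \<phi>\<close> agrees with \<open>f \<circ> inv \<phi>\<close> on \<open>U\<close>; injectivity of \<open>f\<close> then recovers \<open>\<phi>\<close>.\<close>
lemma inj_on_conj_supported:
  assumes inj: "inj_on f U" and displace: "\<forall>x\<in>U. f x \<notin> U"
  shows "inj_on (\<lambda>\<phi>. \<phi> \<circ> f \<circ> inv \<phi>) {\<phi>. bij \<phi> \<and> (\<forall>x. x \<notin> U \<longrightarrow> \<phi> x = x)}"
proof (rule inj_onI)
  fix \<phi> \<psi>
  assume "\<phi> \<in> {\<phi>. bij \<phi> \<and> (\<forall>x. x \<notin> U \<longrightarrow> \<phi> x = x)}" "\<psi> \<in> {\<phi>. bij \<phi> \<and> (\<forall>x. x \<notin> U \<longrightarrow> \<phi> x = x)}"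
  then have \<phi>: "bij \<phi>" "\<forall>x. x \<notin> U \<longrightarrow> \<phi> x = x" and \<psi>: "bij \<psi>" "\<forall>x. x \<notin> U \<longrightarrow> \<psi> x = x"
    by auto
  assume conj: "\<phi> \<circ> f \<circ> inv \<phi> = \<psi> \<circ> f \<circ> inv \<psi>"
  have "inv \<phi> x = inv \<psi> x" for x
  proof (cases "x \<in> U")
    case True
    have "(\<phi> \<circ> f \<circ> inv \<phi>) x = f (inv \<phi> x)"
      using \<phi> displace inv_bij_supported(2)[OF \<phi> True] by simp
    moreover have "(\<psi> \<circ> f \<circ> inv \<psi>) x = f (inv \<psi> x)"
      using \<psi> displace inv_bij_supported(2)[OF \<psi> True] by simp
    ultimately have "f (inv \<phi> x) = f (inv \<psi> x)" using conj by simp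
    then show ?thesis
      using inj_onD[OF inj] inv_bij_supported(2)[OF \<phi> True] inv_bij_supported(2)[OF \<psi> True] by blast
  next
    case False
    then show ?thesis using inv_bij_supported(1)[OF \<phi>] inv_bij_supported(1)[OF \<psi>] by simp
  qed
  then have "inv \<phi> = inv \<psi>" by blast
  then show "\<phi> = \<psi>" using \<phi>(1) \<psi>(1) by (metis inv_inv_eq)
qed

theorem mainTheorem10:
  fixes d :: nat and G :: "(nat list \<Rightarrow> nat list) set"
    and f :: "(nat \<Rightarrow> nat) \<Rightarrow> (nat \<Rightarrow> nat)"
  assumes "d \<ge> 2" and "self_similar d G"
    and "f \<in> Vgrp d G" and "f \<noteq> id"
  shows "infinite {\<phi> \<circ> f \<circ> inv \<phi> | \<phi>. \<phi> \<in> Fgrp d}"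
proof -
  have "\<forall>g\<in>G. tree_aut d g"
    using assms(2) by (auto simp: self_similar_def aut_subgroup_def)
  then obtain u where u: "u \<in> words d" and displace: "\<forall>x\<in>cone d u. f x \<notin> cone d u"
    and inj: "inj_on f (cone d u)"
    using Vgrp_displaces_cone[OF _ _ assms(3,4)] assms(1) by (metis Suc_1 Suc_leD)
  define S where "S = {\<phi> \<in> Fgrp d. \<forall>x. x \<notin> cone d u \<longrightarrow> \<phi> x = x}"
  have "infinite S" unfolding S_def using infinite_Fgrp_supported_in_cone[OF assms(1) u] .
  moreover have "S \<subseteq> {\<phi>. bij \<phi> \<and> (\<forall>x. x \<notin> cone d u \<longrightarrow> \<phi> x = x)}"
    using Vgrp_trivial_bij by (auto simp: S_def Fgrp_def)
  then have "inj_on (\<lambda>\<phi>. \<phi> \<circ> f \<circ> inv \<phi>) S"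
    using inj_on_conj_supported[OF inj displace] inj_on_subset by blast
  moreover have "(\<lambda>\<phi>. \<phi> \<circ> f \<circ> inv \<phi>) ` S \<subseteq> {\<phi> \<circ> f \<circ> inv \<phi> | \<phi>. \<phi> \<in> Fgrp d}"
    by (auto simp: S_def)
  ultimately show ?thesis using inj_on_finite by blast
qed

end
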